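(* Let $Z=(Z_j)_{j\in N}$ be independent random variables indexed by a finite or countable set $N$. Then for all $X,Y\in B(Z)$, the Shapley influence distributions satisfy \[ \mathrm{TV}(\mu_X,\mu_Y)\le\sqrt{\mathbb E\big[(X-Y)^2\big]}. \]
   Context: The $Z_j$ take values in standard Borel spaces and are defined on a common probability space; for $S\subseteq N$ write $Z_S=(Z_i)_{i\in S}$. $B(Z)$ is the set of real random variables $X$ measurable with respect to $\sigma(Z)$ with $\mathbb E[X]=0$ and $\mathbb E[X^2]=1$. For $X\in B(Z)$ define the cooperative game $v_X(S)=\mathrm{Var}(\mathbb E[X\mid Z_S])$ for finite nonempty $S\subseteq N$ (with $v_X(\emptyset)=0$). Its Harsanyi dividends $d_X(T)$, for finite nonempty $T\subseteq N$, are the unique numbers with $v_X(S)=\sum_{\emptyset\ne T\subseteq S}d_X(T)$ for every finite $S$, and the Shapley value of player $k$ is $\mu_X(k)=\sum_{S\ni k,\ S\text{ finite}}\frac{d_X(S)}{|S|}$. The resulting $\mu_X$ is a probability measure on $N$, called the Shapley influence distribution of $X$. Total variation distance: $\mathrm{TV}(\mu,\nu)=\frac12\sum_{i\in N}|\mu(i)-\nu(i)|$. *)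

theory Defs
  imports "HOL-Probability.Probability"
begin

text \<open>Standard Borel space: measurably isomorphic to a Borel subset of the real line
  (Kuratowski's characterisation of standard Borel spaces).\<close>
definition standard_borel :: "'v measure \<Rightarrow> bool" where
  "standard_borel S \<longleftrightarrow>
     (\<exists>A \<in> sets (borel :: real measure). \<exists>f g.
        f \<in> S \<rightarrow>\<^sub>M restrict_space borel A \<and> g \<in> restrict_space borel A \<rightarrow>\<^sub>M S \<and>
        (\<forall>x \<in> space S. g (f x) = x) \<and> (\<forall>y \<in> A. f (g y) = y))"

definition sigmaZ :: "'a measure \<Rightarrow> ('i \<Rightarrow> 'v measure) \<Rightarrow> ('i \<Rightarrow> 'a \<Rightarrow> 'v) \<Rightarrow> 'i set \<Rightarrow> 'a measure" where
  "sigmaZ M Sp Z S = sigma (space M) (\<Union>j\<in>S. {Z j -` A \<inter> space M | A. A \<in> sets (Sp j)})"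

definition BZ :: "'a measure \<Rightarrow> ('i \<Rightarrow> 'v measure) \<Rightarrow> ('i \<Rightarrow> 'a \<Rightarrow> 'v) \<Rightarrow> 'i set \<Rightarrow> ('a \<Rightarrow> real) set" where
  "BZ M Sp Z N = {X. X \<in> borel_measurable (sigmaZ M Sp Z N) \<and>
                     integrable M (\<lambda>\<omega>. (X \<omega>)\<^sup>2) \<and>
                     (\<integral>\<omega>. X \<omega> \<partial>M) = 0 \<and> (\<integral>\<omega>. (X \<omega>)\<^sup>2 \<partial>M) = 1}"

definition var :: "'a measure \<Rightarrow> ('a \<Rightarrow> real) \<Rightarrow> real" where
  "var M f = (\<integral>\<omega>. (f \<omega> - (\<integral>\<omega>'. f \<omega>' \<partial>M))\<^sup>2 \<partial>M)"

definition vgame :: "'a measure \<Rightarrow> ('i \<Rightarrow> 'v measure) \<Rightarrow> ('i \<Rightarrow> 'a \<Rightarrow> 'v) \<Rightarrow> ('a \<Rightarrow> real) \<Rightarrow> 'i set \<Rightarrow> real" where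
  "vgame M Sp Z X S = (if S = {} then 0 else var M (real_cond_exp M (sigmaZ M Sp Z S) X))"

definition harsanyi :: "'i set \<Rightarrow> ('i set \<Rightarrow> real) \<Rightarrow> 'i set \<Rightarrow> real" where
  "harsanyi N v = (THE d. (\<forall>S. finite S \<and> S \<subseteq> N \<longrightarrow> v S = (\<Sum>T\<in>{T. T \<subseteq> S \<and> T \<noteq> {}}. d T)) \<and>
                          (\<forall>T. \<not> (finite T \<and> T \<noteq> {} \<and> T \<subseteq> N) \<longrightarrow> d T = 0))"

definition shapley :: "'i set \<Rightarrow> ('i set \<Rightarrow> real) \<Rightarrow> 'i \<Rightarrow> real" where
  "shapley N v k = (\<Sum>\<^sub>\<infinity>S\<in>{S. finite S \<and> k \<in> S \<and> S \<subseteq> N}. harsanyi N v S / real (card S))"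

definition shapley_infl :: "'a measure \<Rightarrow> ('i \<Rightarrow> 'v measure) \<Rightarrow> ('i \<Rightarrow> 'a \<Rightarrow> 'v) \<Rightarrow> 'i set \<Rightarrow> ('a \<Rightarrow> real) \<Rightarrow> 'i \<Rightarrow> real" where
  "shapley_infl M Sp Z N X = shapley N (vgame M Sp Z X)"

definition TV :: "'i set \<Rightarrow> ('i \<Rightarrow> real) \<Rightarrow> ('i \<Rightarrow> real) \<Rightarrow> real" where
  "TV N \<mu> \<nu> = (1/2) * (\<Sum>\<^sub>\<infinity>i\<in>N. \<bar>\<mu> i - \<nu> i\<bar>)"

end

theory Submission
  imports Defs
begin

text \<open>
  For X in B(Z), conditioning on Z_S is an orthogonal projection P_S of L2, and independence of
  the coordinates makes these projections commute: P_R P_S = P_{S \<inter> R}. Hence the Moebius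
  inversion X_T = \<Sum>S\<subseteq>T. (-1)^|T - S| P_S X (the Hoeffding components of X) satisfies
  \<langle>X_T, Y_T\<rangle> = \<Sum>S\<subseteq>T. (-1)^|T - S| \<langle>P_S X, Y\<rangle>, so the Harsanyi
  dividend d_X(T) of v_X is the squared norm of X_T; in particular it is nonnegative and the
  dividends inside any finite S add up to v_X(S) \<le> 1. Polarisation gives
  d_X(T) - d_Y(T) = \<langle>(X - Y)_T, (X + Y)_T\<rangle>, and Cauchy-Schwarz, first in L2 and
  then over the coalitions, bounds the total variation of the dividends by
  \<parallel>X - Y\<parallel> \<parallel>X + Y\<parallel> \<le> 2 \<parallel>X - Y\<parallel>. As the Shapley value shares each dividend
  equally among the members of its coalition, TV(mu_X, mu_Y) is at most half of that.
\<close>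

section \<open>Moebius inversion on finite sets\<close>

definition moebius :: "('i set \<Rightarrow> real) \<Rightarrow> 'i set \<Rightarrow> real" where
  "moebius v T = (\<Sum>S\<in>Pow T. (-1) ^ card (T - S) * v S)"

lemma sum_Pow_insert:
  assumes "finite T" "a \<notin> T"
  shows "(\<Sum>S\<in>Pow (insert a T). h S) = (\<Sum>S\<in>Pow T. h S) + (\<Sum>S\<in>Pow T. h (insert a S))"
proof -
  have "inj_on (insert a) (Pow T)"
    using assms(2) by (auto simp: inj_on_def)
  moreover have "Pow T \<inter> insert a ` Pow T = {}"
    using assms(2) by auto
  ultimately show ?thesis
    using assms(1) by (simp add: Pow_insert sum.union_disjoint sum.reindex)
qed

lemma card_insert_Diff_Pow:
  assumes "finite T" "a \<notin> T" "S \<subseteq> T"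
  shows "card (insert a T - S) = Suc (card (T - S))"
    and "insert a T - insert a S = T - S"
proof -
  have "insert a T - S = insert a (T - S)"
    using assms by auto
  then show "card (insert a T - S) = Suc (card (T - S))"
    using assms by simp
  show "insert a T - insert a S = T - S"
    using assms by auto
qed

lemma moebius_insert:
  assumes "finite T" "a \<notin> T"
  shows "moebius v (insert a T) = moebius (\<lambda>S. v (insert a S) - v S) T"
  using assms card_insert_Diff_Pow[OF assms]
  by (simp add: moebius_def sum_Pow_insert right_diff_distrib sum_subtractf sum_negf)

lemma sum_Pow_moebius:
  assumes "finite S"
  shows "(\<Sum>T\<in>Pow S. moebius v T) = v S"
  using assms
proof (induction S arbitrary: v rule: finite_induct)
  case empty
  then show ?case by (simp add: moebius_def)
next
  case (insert a S)
  have "(\<Sum>T\<in>Pow S. moebius v (insert a T)) = (\<Sum>T\<in>Pow S. moebius (\<lambda>U. v (insert a U) - v U) T)"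
    using insert by (intro sum.cong refl moebius_insert) (auto intro: finite_subset)
  with insert show ?case
    by (simp add: sum_Pow_insert)
qed

lemma moebius_cong: "(\<And>U. U \<subseteq> T \<Longrightarrow> v U = w U) \<Longrightarrow> moebius v T = moebius w T"
  unfolding moebius_def by (intro sum.cong) auto

lemma moebius_diff: "moebius v T - moebius w T = moebius (\<lambda>U. v U - w U) T"
  unfolding moebius_def by (simp add: sum_subtractf right_diff_distrib)

text \<open>Applied to the Gram matrix of commuting projections, this identifies Moebius transforms
  as squared norms.\<close>
lemma moebius_Int:
  assumes "finite T"
  shows "(\<Sum>S\<in>Pow T. \<Sum>R\<in>Pow T. (-1) ^ card (T - S) * (-1) ^ card (T - R) * f (S \<inter> R))
           = moebius f T"
  using assms
proof (induction T arbitrary: f rule: finite_induct)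
  case empty
  then show ?case by (simp add: moebius_def)
next
  case (insert a T)
  have Int_insert: "insert a S \<inter> insert a R = insert a (S \<inter> R)"
    "insert a S \<inter> R = S \<inter> R" "S \<inter> insert a R = S \<inter> R"
    if "S \<in> Pow T" "R \<in> Pow T" for S R
    using that insert by auto
  let ?g = "\<lambda>U. f (insert a U) - f U"
  have "(\<Sum>S\<in>Pow (insert a T). \<Sum>R\<in>Pow (insert a T).
          (-1) ^ card (insert a T - S) * (-1) ^ card (insert a T - R) * f (S \<inter> R))
      = (\<Sum>S\<in>Pow T. \<Sum>R\<in>Pow T. (-1) ^ card (T - S) * (-1) ^ card (T - R) * ?g (S \<inter> R))"
    using insert(1,2) card_insert_Diff_Pow[OF insert(1,2)]
    by (simp add: sum_Pow_insert Int_insert sum.distrib right_diff_distrib sum_subtractf sum_negf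
        algebra_simps)
  also have "\<dots> = moebius ?g T"
    by (rule insert.IH)
  also have "\<dots> = moebius f (insert a T)"
    using insert(1,2) by (simp add: moebius_insert)
  finally show ?case .
qed

lemma sum_nonempty_subsets_split:
  assumes "finite T" "T \<noteq> {}"
  shows "(\<Sum>U\<in>{U. U \<subseteq> T \<and> U \<noteq> {}}. f U) = f T + (\<Sum>U\<in>{U. U \<subset> T \<and> U \<noteq> {}}. f U)"
proof -
  have "{U. U \<subseteq> T \<and> U \<noteq> {}} = insert T {U. U \<subset> T \<and> U \<noteq> {}}"
    using assms(2) by auto
  moreover have "finite {U. U \<subset> T \<and> U \<noteq> {}}"
    using assms(1) by (rule finite_subset[rotated, OF finite_Pow_iff[THEN iffD2]]) auto
  ultimately show ?thesis by simp
qed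

lemma nonempty_subset_sums_inject:
  fixes d d' :: "'i set \<Rightarrow> real"
  assumes sums: "\<And>S. finite S \<Longrightarrow> S \<subseteq> N \<Longrightarrow>
      (\<Sum>T\<in>{T. T \<subseteq> S \<and> T \<noteq> {}}. d T) = (\<Sum>T\<in>{T. T \<subseteq> S \<and> T \<noteq> {}}. d' T)"
    and outside: "\<And>T. \<not> (finite T \<and> T \<noteq> {} \<and> T \<subseteq> N) \<Longrightarrow> d T = 0 \<and> d' T = 0"
  shows "d = d'"
proof
  fix T
  show "d T = d' T"
  proof (cases "finite T")
    case True
    then show ?thesis
    proof (induction T rule: finite_psubset_induct)
      case (psubset T)
      show ?case
      proof (cases "T \<noteq> {} \<and> T \<subseteq> N")
        case False
        with outside show ?thesis by auto
      next
        case True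
        have "(\<Sum>U\<in>{U. U \<subset> T \<and> U \<noteq> {}}. d U) = (\<Sum>U\<in>{U. U \<subset> T \<and> U \<noteq> {}}. d' U)"
          using psubset.IH by (intro sum.cong) auto
        with sums[of T] True psubset.hyps show ?thesis
          by (simp add: sum_nonempty_subsets_split)
      qed
    qed
  next
    case False
    with outside show ?thesis by auto
  qed
qed

lemma harsanyi_eq_moebius:
  assumes "v {} = 0"
  shows "harsanyi N v = (\<lambda>T. if T \<in> Fpow N \<and> T \<noteq> {} then moebius v T else 0)"
    (is "_ = ?d")
  unfolding harsanyi_def
proof (rule the_equality)
  have repr: "v S = (\<Sum>T\<in>{T. T \<subseteq> S \<and> T \<noteq> {}}. ?d T)" if "finite S" "S \<subseteq> N" for S
  proof -
    have "{T. T \<subseteq> S \<and> T \<noteq> {}} = Pow S - {{}}"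
      by auto
    then have "(\<Sum>T\<in>{T. T \<subseteq> S \<and> T \<noteq> {}}. ?d T) = (\<Sum>T\<in>Pow S - {{}}. moebius v T)"
      using that by (intro sum.cong) (auto simp: Fpow_def intro: finite_subset)
    also have "\<dots> = v S"
      using that assms sum_Pow_moebius[of S v] by (simp add: sum_diff1 moebius_def)
    finally show ?thesis by simp
  qed
  then show "(\<forall>S. finite S \<and> S \<subseteq> N \<longrightarrow> v S = (\<Sum>T\<in>{T. T \<subseteq> S \<and> T \<noteq> {}}. ?d T)) \<and>
      (\<forall>T. \<not> (finite T \<and> T \<noteq> {} \<and> T \<subseteq> N) \<longrightarrow> ?d T = 0)"
    by (auto simp: Fpow_def)
  fix d
  assume "(\<forall>S. finite S \<and> S \<subseteq> N \<longrightarrow> v S = (\<Sum>T\<in>{T. T \<subseteq> S \<and> T \<noteq> {}}. d T)) \<and>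
      (\<forall>T. \<not> (finite T \<and> T \<noteq> {} \<and> T \<subseteq> N) \<longrightarrow> d T = 0)"
  with repr show "d = ?d"
    by (intro nonempty_subset_sums_inject[where N = N]) (auto simp: Fpow_def)
qed

lemma sum_Pow_harsanyi:
  assumes "u {} = 0" "S \<in> Fpow N"
  shows "(\<Sum>T\<in>Pow S. harsanyi N u T) = u S"
proof -
  have "(\<Sum>T\<in>Pow S. harsanyi N u T) = (\<Sum>T\<in>Pow S. moebius u T)"
    using assms by (intro sum.cong) (auto simp: harsanyi_eq_moebius Fpow_def moebius_def
        intro: rev_finite_subset)
  also have "\<dots> = u S"
    using assms(2) by (simp add: sum_Pow_moebius Fpow_def)
  finally show ?thesis .
qed

section \<open>Shapley values of nonnegative dividends\<close>

lemma summable_on_Fpow_if_Pow_sums_bounded: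
  fixes e :: "'i set \<Rightarrow> real"
  assumes nonneg: "\<And>T. T \<in> Fpow N \<Longrightarrow> 0 \<le> e T"
    and bounded: "\<And>S. S \<in> Fpow N \<Longrightarrow> sum e (Pow S) \<le> C"
  shows "e summable_on Fpow N" and "infsum e (Fpow N) \<le> C"
proof -
  have finite_sums: "sum e G \<le> C" if "finite G" "G \<subseteq> Fpow N" for G
  proof -
    have "finite (\<Union>G)"
      using that by (auto simp: Fpow_def)
    then have "\<Union>G \<in> Fpow N" and "Pow (\<Union>G) \<subseteq> Fpow N"
      using that by (auto simp: Fpow_def intro: rev_finite_subset)
    then have "sum e G \<le> sum e (Pow (\<Union>G))"
      using nonneg \<open>finite (\<Union>G)\<close> by (intro sum_mono2) auto
    also have "\<dots> \<le> C"
      using \<open>\<Union>G \<in> Fpow N\<close> by (rule bounded)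
    finally show ?thesis .
  qed
  then show summable: "e summable_on Fpow N"
    using nonneg by (intro nonneg_bdd_above_summable_on bdd_aboveI[where M = C]) auto
  show "infsum e (Fpow N) \<le> C"
    using summable finite_sums by (rule infsum_le_finite_sums)
qed

lemma infsum_sum_finite:
  fixes g :: "'k \<Rightarrow> 'a \<Rightarrow> real"
  assumes "finite K" "\<And>k. k \<in> K \<Longrightarrow> g k summable_on A"
  shows "(\<lambda>x. \<Sum>k\<in>K. g k x) summable_on A"
    and "infsum (\<lambda>x. \<Sum>k\<in>K. g k x) A = (\<Sum>k\<in>K. infsum (g k) A)"
  using assms by (induction K rule: finite_induct) (auto simp: summable_on_add infsum_add)

lemma summable_on_diff:
  fixes f g :: "'a \<Rightarrow> 'b::topological_ab_group_add"
  assumes "f summable_on A" "g summable_on A"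
  shows "(\<lambda>x. f x - g x) summable_on A"
  using summable_on_add[OF assms(1) summable_on_uminus[THEN iffD2, OF assms(2)]] by simp

lemma infsum_diff:
  fixes f g :: "'a \<Rightarrow> 'b::{topological_ab_group_add, t2_space}"
  assumes "f summable_on A" "g summable_on A"
  shows "infsum (\<lambda>x. f x - g x) A = infsum f A - infsum g A"
  using infsum_add[OF assms(1) summable_on_uminus[THEN iffD2, OF assms(2)]]
  by (simp add: infsum_uminus)

lemma abs_divide_of_nat_le: "\<bar>x :: real\<bar> / of_nat n \<le> \<bar>x\<bar>"
  by (cases n) (simp_all add: divide_le_eq algebra_simps)

lemma summable_on_divide_card:
  fixes d :: "'i set \<Rightarrow> real"
  assumes "d summable_on A" "B \<subseteq> A"
  shows "(\<lambda>S. d S / card S) summable_on B"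
proof -
  have "(\<lambda>S. norm (d S)) summable_on B"
    using summable_on_subset_banach[OF assms]
    by (rule summable_on_iff_abs_summable_on_real[THEN iffD1])
  then have "(\<lambda>S. norm (d S / card S)) summable_on B"
    by (rule summable_on_comparison_test) (simp_all add: abs_div abs_divide_of_nat_le)
  then show ?thesis
    by (rule summable_on_iff_abs_summable_on_real[THEN iffD2])
qed

lemma sum_if_mem_divide_card_le:
  assumes "finite K" "finite T" "0 \<le> c"
  shows "(\<Sum>k\<in>K. if k \<in> T then c / card T else 0) \<le> c"
proof -
  have "(\<Sum>k\<in>K. if k \<in> T then c / card T else 0) = card (K \<inter> T) * (c / card T)"
    using assms(1) by (simp add: sum.If_cases)
  also have "\<dots> \<le> card T * (c / card T)"
    using assms by (intro mult_right_mono) (auto intro: card_mono)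
  also have "\<dots> \<le> c"
    by (cases "card T = 0") (simp_all add: assms(3))
  finally show ?thesis .
qed

lemma abs_infsum_divide_card_le:
  fixes d :: "'i set \<Rightarrow> real"
  assumes "d summable_on Fpow N"
  shows "\<bar>\<Sum>\<^sub>\<infinity>S\<in>{S. finite S \<and> k \<in> S \<and> S \<subseteq> N}. d S / card S\<bar>
           \<le> (\<Sum>\<^sub>\<infinity>T\<in>Fpow N. if k \<in> T then \<bar>d T\<bar> / card T else 0)"
proof -
  have "{S. finite S \<and> k \<in> S \<and> S \<subseteq> N} \<subseteq> Fpow N"
    by (auto simp: Fpow_def)
  from summable_on_divide_card[OF assms this]
  have "(\<lambda>S. norm (d S / card S)) summable_on {S. finite S \<and> k \<in> S \<and> S \<subseteq> N}"
    by (rule summable_on_iff_abs_summable_on_real[THEN iffD1])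
  from norm_infsum_bound[OF this]
  have "\<bar>\<Sum>\<^sub>\<infinity>S\<in>{S. finite S \<and> k \<in> S \<and> S \<subseteq> N}. d S / card S\<bar>
      \<le> (\<Sum>\<^sub>\<infinity>S\<in>{S. finite S \<and> k \<in> S \<and> S \<subseteq> N}. \<bar>d S\<bar> / card S)"
    by (simp add: abs_div)
  also have "\<dots> = (\<Sum>\<^sub>\<infinity>T\<in>Fpow N. if k \<in> T then \<bar>d T\<bar> / card T else 0)"
    by (rule infsum_cong_neutral) (auto simp: Fpow_def)
  finally show ?thesis .
qed

lemma infsum_abs_shapley_le:
  fixes d :: "'i set \<Rightarrow> real"
  assumes "d summable_on Fpow N"
  shows "(\<Sum>\<^sub>\<infinity>k\<in>N. \<bar>\<Sum>\<^sub>\<infinity>S\<in>{S. finite S \<and> k \<in> S \<and> S \<subseteq> N}. d S / card S\<bar>)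
           \<le> (\<Sum>\<^sub>\<infinity>T\<in>Fpow N. \<bar>d T\<bar>)"
proof -
  define share where "share k T = (if k \<in> T then \<bar>d T\<bar> / card T else 0)" for k T
  have abs_summable: "(\<lambda>T. \<bar>d T\<bar>) summable_on Fpow N"
    using summable_on_iff_abs_summable_on_real[THEN iffD1, OF assms] by simp
  have share_summable: "share k summable_on Fpow N" for k
    unfolding share_def
    by (rule summable_on_comparison_test[OF abs_summable])
      (use abs_divide_of_nat_le in \<open>auto simp: abs_div\<close>)
  have "(\<Sum>k\<in>K. \<bar>\<Sum>\<^sub>\<infinity>S\<in>{S. finite S \<and> k \<in> S \<and> S \<subseteq> N}. d S / card S\<bar>) \<le> (\<Sum>\<^sub>\<infinity>T\<in>Fpow N. \<bar>d T\<bar>)"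
    if K: "finite K" for K
  proof -
    have "(\<Sum>k\<in>K. \<bar>\<Sum>\<^sub>\<infinity>S\<in>{S. finite S \<and> k \<in> S \<and> S \<subseteq> N}. d S / card S\<bar>)
        \<le> (\<Sum>k\<in>K. infsum (share k) (Fpow N))"
      unfolding share_def using assms by (intro sum_mono abs_infsum_divide_card_le)
    also have "\<dots> = (\<Sum>\<^sub>\<infinity>T\<in>Fpow N. \<Sum>k\<in>K. share k T)"
      using infsum_sum_finite(2)[OF K share_summable] by simp
    also have "\<dots> \<le> (\<Sum>\<^sub>\<infinity>T\<in>Fpow N. \<bar>d T\<bar>)"
      using infsum_sum_finite(1)[OF K share_summable] abs_summable
    proof (rule infsum_mono)
      show "(\<Sum>k\<in>K. share k T) \<le> \<bar>d T\<bar>" if "T \<in> Fpow N" for T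
        unfolding share_def using K that by (intro sum_if_mem_divide_card_le) (auto simp: Fpow_def)
    qed
    finally show ?thesis .
  qed
  moreover have "0 \<le> (\<Sum>\<^sub>\<infinity>T\<in>Fpow N. \<bar>d T\<bar>)"
    by (simp add: infsum_nonneg)
  ultimately show ?thesis
    by (cases "(\<lambda>k. \<bar>\<Sum>\<^sub>\<infinity>S\<in>{S. finite S \<and> k \<in> S \<and> S \<subseteq> N}. d S / card S\<bar>) summable_on N")
      (auto intro: infsum_le_finite_sums simp: infsum_not_exists)
qed

lemma summable_on_Fpow_harsanyi:
  assumes "u {} = 0"
    and "\<And>T. T \<in> Fpow N \<Longrightarrow> 0 \<le> moebius u T"
    and "\<And>S. S \<in> Fpow N \<Longrightarrow> u S \<le> C"
  shows "harsanyi N u summable_on Fpow N"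
proof (rule summable_on_Fpow_if_Pow_sums_bounded)
  show "0 \<le> harsanyi N u T" if "T \<in> Fpow N" for T
    using assms that by (simp add: harsanyi_eq_moebius)
  show "sum (harsanyi N u) (Pow S) \<le> C" if "S \<in> Fpow N" for S
    using assms that by (simp add: sum_Pow_harsanyi)
qed

lemma TV_shapley_le:
  fixes v w :: "'i set \<Rightarrow> real"
  assumes empty: "v {} = 0" "w {} = 0"
    and nonneg: "\<And>T. T \<in> Fpow N \<Longrightarrow> 0 \<le> moebius v T" "\<And>T. T \<in> Fpow N \<Longrightarrow> 0 \<le> moebius w T"
    and bounded: "\<And>S. S \<in> Fpow N \<Longrightarrow> v S \<le> C" "\<And>S. S \<in> Fpow N \<Longrightarrow> w S \<le> C"
    and close: "\<And>S. S \<in> Fpow N \<Longrightarrow> (\<Sum>T\<in>Pow S. \<bar>moebius v T - moebius w T\<bar>) \<le> 2 * K"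
  shows "TV N (shapley N v) (shapley N w) \<le> K"
proof -
  define d where "d T = harsanyi N v T - harsanyi N w T" for T
  have summable_v: "harsanyi N v summable_on Fpow N"
    using empty(1) nonneg(1) bounded(1) by (rule summable_on_Fpow_harsanyi)
  have summable_w: "harsanyi N w summable_on Fpow N"
    using empty(2) nonneg(2) bounded(2) by (rule summable_on_Fpow_harsanyi)
  have coalitions: "{S. finite S \<and> k \<in> S \<and> S \<subseteq> N} \<subseteq> Fpow N" for k
    by (auto simp: Fpow_def)
  have shapley_diff: "shapley N v k - shapley N w k
      = (\<Sum>\<^sub>\<infinity>S\<in>{S. finite S \<and> k \<in> S \<and> S \<subseteq> N}. d S / card S)" for k
    unfolding shapley_def d_def diff_divide_distrib
    using summable_on_divide_card[OF summable_v coalitions]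
      summable_on_divide_card[OF summable_w coalitions]
    by (rule infsum_diff[symmetric])
  have d_bounded: "(\<Sum>T\<in>Pow S. \<bar>d T\<bar>) \<le> 2 * K" if "S \<in> Fpow N" for S
  proof -
    have "(\<Sum>T\<in>Pow S. \<bar>d T\<bar>) \<le> (\<Sum>T\<in>Pow S. \<bar>moebius v T - moebius w T\<bar>)"
      using empty by (intro sum_mono) (auto simp: d_def harsanyi_eq_moebius moebius_def)
    also have "\<dots> \<le> 2 * K"
      using that by (rule close)
    finally show ?thesis .
  qed
  have "TV N (shapley N v) (shapley N w)
      = 1/2 * (\<Sum>\<^sub>\<infinity>k\<in>N. \<bar>\<Sum>\<^sub>\<infinity>S\<in>{S. finite S \<and> k \<in> S \<and> S \<subseteq> N}. d S / card S\<bar>)"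
    by (simp add: TV_def shapley_diff)
  also have "\<dots> \<le> 1/2 * (\<Sum>\<^sub>\<infinity>T\<in>Fpow N. \<bar>d T\<bar>)"
    unfolding d_def using summable_on_diff[OF summable_v summable_w]
    by (intro mult_left_mono infsum_abs_shapley_le) simp_all
  also have "\<dots> \<le> 1/2 * (2 * K)"
    using d_bounded by (intro mult_left_mono summable_on_Fpow_if_Pow_sums_bounded(2)) simp_all
  finally show ?thesis by simp
qed

section \<open>Square-integrable functions and conditional expectation\<close>

definition sq_integrable :: "'a measure \<Rightarrow> ('a \<Rightarrow> real) \<Rightarrow> bool" where
  "sq_integrable M f \<longleftrightarrow> f \<in> borel_measurable M \<and> integrable M (\<lambda>x. (f x)\<^sup>2)"

lemma integrable_mult_sq_integrable:
  assumes "sq_integrable M f" "sq_integrable M g"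
  shows "integrable M (\<lambda>x. f x * g x)"
proof (rule Bochner_Integration.integrable_bound)
  show "integrable M (\<lambda>x. (f x)\<^sup>2 + (g x)\<^sup>2)"
    using assms unfolding sq_integrable_def by auto
  show "(\<lambda>x. f x * g x) \<in> borel_measurable M"
    using assms unfolding sq_integrable_def by auto
  have "\<bar>f x * g x\<bar> \<le> (f x)\<^sup>2 + (g x)\<^sup>2" for x
  proof -
    have "2 * (\<bar>f x\<bar> * \<bar>g x\<bar>) \<le> (f x)\<^sup>2 + (g x)\<^sup>2"
      using sum_squares_bound[of "\<bar>f x\<bar>" "\<bar>g x\<bar>"] by (simp add: mult.assoc)
    moreover have "0 \<le> \<bar>f x\<bar> * \<bar>g x\<bar>"
      by simp
    ultimately show ?thesis
      unfolding abs_mult by linarith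
  qed
  then show "AE x in M. norm (f x * g x) \<le> norm ((f x)\<^sup>2 + (g x)\<^sup>2)"
    by simp
qed

lemma sq_integrable_add:
  assumes "sq_integrable M f" "sq_integrable M g"
  shows "sq_integrable M (\<lambda>x. f x + g x)"
  using assms integrable_mult_sq_integrable[OF assms]
  by (auto simp: sq_integrable_def power2_sum mult.assoc)

lemma sq_integrable_diff:
  assumes "sq_integrable M f" "sq_integrable M g"
  shows "sq_integrable M (\<lambda>x. f x - g x)"
  using assms integrable_mult_sq_integrable[OF assms]
  by (auto simp: sq_integrable_def power2_diff mult.assoc)

lemma sq_integrable_cmult:
  "sq_integrable M f \<Longrightarrow> sq_integrable M (\<lambda>x. c * f x)"
  by (auto simp: sq_integrable_def power_mult_distrib)

lemma sq_integrable_sum: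
  assumes "finite I" "\<And>i. i \<in> I \<Longrightarrow> sq_integrable M (f i)"
  shows "sq_integrable M (\<lambda>x. \<Sum>i\<in>I. f i x)"
  using assms
proof (induction I rule: finite_induct)
  case empty
  then show ?case by (simp add: sq_integrable_def)
next
  case insert
  then show ?case by (simp add: sq_integrable_add)
qed

lemma integral_parallelogram:
  assumes "sq_integrable M f" "sq_integrable M g"
  shows "(\<integral>x. (f x + g x)\<^sup>2 \<partial>M) + (\<integral>x. (f x - g x)\<^sup>2 \<partial>M)
           = 2 * (\<integral>x. (f x)\<^sup>2 \<partial>M) + 2 * (\<integral>x. (g x)\<^sup>2 \<partial>M)"
proof -
  have "(\<integral>x. (f x + g x)\<^sup>2 \<partial>M) + (\<integral>x. (f x - g x)\<^sup>2 \<partial>M)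
      = (\<integral>x. (f x + g x)\<^sup>2 + (f x - g x)\<^sup>2 \<partial>M)"
    using sq_integrable_add[OF assms] sq_integrable_diff[OF assms] by (simp add: sq_integrable_def)
  also have "\<dots> = (\<integral>x. 2 * (f x)\<^sup>2 + 2 * (g x)\<^sup>2 \<partial>M)"
    by (simp add: power2_eq_square algebra_simps)
  also have "\<dots> = 2 * (\<integral>x. (f x)\<^sup>2 \<partial>M) + 2 * (\<integral>x. (g x)\<^sup>2 \<partial>M)"
    using assms by (simp add: sq_integrable_def)
  finally show ?thesis .
qed

lemma discriminant_le_of_nonneg_quadratic:
  fixes a b c :: real
  assumes nonneg: "\<And>t. 0 \<le> a - 2 * t * b + t\<^sup>2 * c" and "0 \<le> c"
  shows "b\<^sup>2 \<le> a * c"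
proof (cases "c = 0")
  case True
  have "b = 0"
  proof (rule ccontr)
    assume "b \<noteq> 0"
    then have "a - 2 * ((a + 1) / (2 * b)) * b = -1"
      by (simp add: field_simps)
    with nonneg[of "(a + 1) / (2 * b)"] True show False
      by simp
  qed
  with True show ?thesis by simp
next
  case False
  with \<open>0 \<le> c\<close> have "0 < c" by simp
  have "0 \<le> a - 2 * (b / c) * b + (b / c)\<^sup>2 * c"
    by (rule nonneg)
  also have "\<dots> = (a * c - b\<^sup>2) / c"
    using \<open>0 < c\<close> by (simp add: field_simps power2_eq_square)
  finally show ?thesis
    using \<open>0 < c\<close> by (simp add: zero_le_divide_iff)
qed

lemma Cauchy_Schwarz_integral:
  assumes "sq_integrable M f" "sq_integrable M g"
  shows "\<bar>\<integral>x. f x * g x \<partial>M\<bar> \<le> sqrt (\<integral>x. (f x)\<^sup>2 \<partial>M) * sqrt (\<integral>x. (g x)\<^sup>2 \<partial>M)"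
proof -
  have "(\<integral>x. f x * g x \<partial>M)\<^sup>2 \<le> (\<integral>x. (f x)\<^sup>2 \<partial>M) * (\<integral>x. (g x)\<^sup>2 \<partial>M)"
  proof (rule discriminant_le_of_nonneg_quadratic)
    fix t :: real
    have "0 \<le> (\<integral>x. (f x - t * g x)\<^sup>2 \<partial>M)"
      by simp
    also have "\<dots> = (\<integral>x. (f x)\<^sup>2 - 2 * t * (f x * g x) + t\<^sup>2 * (g x)\<^sup>2 \<partial>M)"
      by (simp add: power2_diff power_mult_distrib algebra_simps)
    also have "\<dots> = (\<integral>x. (f x)\<^sup>2 \<partial>M) - 2 * t * (\<integral>x. f x * g x \<partial>M) + t\<^sup>2 * (\<integral>x. (g x)\<^sup>2 \<partial>M)"
      using assms integrable_mult_sq_integrable[OF assms] by (simp add: sq_integrable_def)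
    finally show "0 \<le> \<dots>" .
  qed simp
  then have "sqrt ((\<integral>x. f x * g x \<partial>M)\<^sup>2) \<le> sqrt ((\<integral>x. (f x)\<^sup>2 \<partial>M) * (\<integral>x. (g x)\<^sup>2 \<partial>M))"
    by (rule real_sqrt_le_mono)
  then show ?thesis
    by (simp add: real_sqrt_mult)
qed

context prob_space
begin

lemma integrable_sq_integrable: "sq_integrable M f \<Longrightarrow> integrable M f"
  unfolding sq_integrable_def by (auto intro: square_integrable_imp_integrable)

context
  fixes F :: "'a measure"
  assumes subalg: "subalgebra M F"
begin

interpretation sigma_finite_subalgebra M F
  by (rule finite_measure_subalgebra_is_sigma_finite) (unfold_locales, fact subalg)

lemma sq_integrable_real_cond_exp:
  assumes "sq_integrable M f"
  shows "sq_integrable M (real_cond_exp M F f)"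
proof -
  have "integrable M (\<lambda>x. (real_cond_exp M F f x)\<^sup>2)"
    by (rule integrable_convex_cond_exp[where I = UNIV and q = "\<lambda>x. x\<^sup>2"])
      (use assms in \<open>auto simp: integrable_sq_integrable convex_power2 sq_integrable_def\<close>)
  then show ?thesis
    unfolding sq_integrable_def by simp
qed

lemma integral_real_cond_exp_mult:
  assumes "sq_integrable M f" "sq_integrable M g"
  shows "(\<integral>x. real_cond_exp M F f x * g x \<partial>M)
           = (\<integral>x. real_cond_exp M F f x * real_cond_exp M F g x \<partial>M)"
  using assms sq_integrable_real_cond_exp[OF assms(1)]
  by (intro real_cond_exp_intg(2)[symmetric])
    (auto simp: sq_integrable_def intro: integrable_mult_sq_integrable)

lemma integral_real_cond_exp_mult_sym:
  assumes "sq_integrable M f" "sq_integrable M g"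
  shows "(\<integral>x. real_cond_exp M F f x * g x \<partial>M) = (\<integral>x. f x * real_cond_exp M F g x \<partial>M)"
  using integral_real_cond_exp_mult[OF assms] integral_real_cond_exp_mult[OF assms(2,1)]
  by (simp add: mult.commute)

lemma integral_real_cond_exp_mult_self:
  assumes "sq_integrable M f"
  shows "(\<integral>x. real_cond_exp M F f x * f x \<partial>M) = (\<integral>x. (real_cond_exp M F f x)\<^sup>2 \<partial>M)"
  using integral_real_cond_exp_mult[OF assms assms] by (simp add: power2_eq_square)

lemma integral_real_cond_exp_square_le:
  assumes "sq_integrable M f"
  shows "(\<integral>x. (real_cond_exp M F f x)\<^sup>2 \<partial>M) \<le> (\<integral>x. (f x)\<^sup>2 \<partial>M)"
proof -
  let ?a = "\<integral>x. (real_cond_exp M F f x)\<^sup>2 \<partial>M" and ?c = "\<integral>x. (f x)\<^sup>2 \<partial>M"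
  have "?a \<le> sqrt ?a * sqrt ?c"
    using Cauchy_Schwarz_integral[OF sq_integrable_real_cond_exp[OF assms] assms]
    by (simp add: integral_real_cond_exp_mult_self[OF assms])
  then have "sqrt ?a * sqrt ?a \<le> sqrt ?a * sqrt ?c"
    by simp
  moreover have "0 \<le> sqrt ?a" "0 \<le> sqrt ?c"
    by simp_all
  ultimately have "sqrt ?a \<le> sqrt ?c"
    by (metis mult_left_le_imp_le order_le_less)
  then show ?thesis
    by simp
qed

lemma AE_real_cond_exp_trivial:
  assumes "sets F = {{}, space M}" "integrable M f"
  shows "AE x in M. real_cond_exp M F f x = expectation f"
proof (rule real_cond_exp_charact)
  fix A
  assume "A \<in> sets F"
  with assms(1) have "A = {} \<or> A = space M"
    by auto
  then show "(\<integral>x\<in>A. f x \<partial>M) = (\<integral>x\<in>A. expectation f \<partial>M)"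
    using assms(2)
    by (elim disjE) (simp add: set_lebesgue_integral_def, simp add: set_integral_space prob_space)
qed (use assms(2) in auto)

end

end

lemma set_integral_Diff_space:
  fixes f :: "'a \<Rightarrow> real"
  assumes "integrable M f" "A \<in> sets M"
  shows "(\<integral>x\<in>space M - A. f x \<partial>M) = (\<integral>x. f x \<partial>M) - (\<integral>x\<in>A. f x \<partial>M)"
proof -
  have "(\<integral>x\<in>space M - A. f x \<partial>M) = (\<integral>x. f x - indicator A x * f x \<partial>M)"
    unfolding set_lebesgue_integral_def
    by (rule Bochner_Integration.integral_cong) (auto simp: indicator_def)
  also have "\<dots> = (\<integral>x. f x \<partial>M) - (\<integral>x\<in>A. f x \<partial>M)"
    using assms integrable_mult_indicator[OF assms(2,1)] by (simp add: set_lebesgue_integral_def)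
  finally show ?thesis .
qed

lemma set_integral_eq_on_sigma_sets:
  fixes f g :: "'a \<Rightarrow> real"
  assumes "integrable M f" "integrable M g"
    and "Int_stable G" "G \<subseteq> sets M"
    and "(\<integral>x. f x \<partial>M) = (\<integral>x. g x \<partial>M)"
    and "\<And>A. A \<in> G \<Longrightarrow> (\<integral>x\<in>A. f x \<partial>M) = (\<integral>x\<in>A. g x \<partial>M)"
    and "A \<in> sigma_sets (space M) G"
  shows "(\<integral>x\<in>A. f x \<partial>M) = (\<integral>x\<in>A. g x \<partial>M)"
proof -
  have G_Pow: "G \<subseteq> Pow (space M)"
    using assms(4) sets.sets_into_space by auto
  have sigma_G: "sigma_sets (space M) G \<subseteq> sets M"
    using assms(4) by (rule sets.sigma_sets_subset)
  from assms(3) G_Pow assms(7) show ?thesis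
  proof (induction rule: sigma_sets_induct_disjoint)
    case (basic A)
    then show ?case by (rule assms(6))
  next
    case empty
    then show ?case by (simp add: set_lebesgue_integral_def)
  next
    case (compl A)
    with sigma_G have "A \<in> sets M"
      by auto
    with compl.IH show ?case
      using assms(5)
      by (simp add: set_integral_Diff_space[OF assms(1)] set_integral_Diff_space[OF assms(2)])
  next
    case (union A)
    have A: "range A \<subseteq> sets M"
      using union.hyps(2) sigma_G by auto
    then have U: "(\<Union>i. A i) \<in> sets M"
      by auto
    have "set_integrable M (\<Union>i. A i) f" "set_integrable M (\<Union>i. A i) g"
      unfolding set_integrable_def
      using integrable_mult_indicator[OF U assms(1)] integrable_mult_indicator[OF U assms(2)] .
    with A union.hyps(1) union.IH show ?case
      by (simp add: lebesgue_integral_countable_add disjoint_family_on_def)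
  qed
qed

lemma Int_stable_Int_sets: "Int_stable {B \<inter> C | B C. B \<in> sets M1 \<and> C \<in> sets M2}"
proof (rule Int_stableI)
  fix A A'
  assume "A \<in> {B \<inter> C | B C. B \<in> sets M1 \<and> C \<in> sets M2}"
    and "A' \<in> {B \<inter> C | B C. B \<in> sets M1 \<and> C \<in> sets M2}"
  then obtain B C B' C' where "A = B \<inter> C" "A' = B' \<inter> C'"
    "B \<in> sets M1" "C \<in> sets M2" "B' \<in> sets M1" "C' \<in> sets M2"
    by blast
  then show "A \<inter> A' \<in> {B \<inter> C | B C. B \<in> sets M1 \<and> C \<in> sets M2}"
    by (intro CollectI exI[of _ "B \<inter> B'"] exI[of _ "C \<inter> C'"]) auto
qed

section \<open>Independent coordinates\<close>

lemma (in prob_space) indep_set_mono: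
  assumes "indep_set A B" "A' \<subseteq> A" "B' \<subseteq> B"
  shows "indep_set A' B'"
  using assms(1) unfolding indep_set_def
  by (rule indep_sets_mono_sets) (use assms(2,3) in \<open>auto split: bool.split\<close>)

locale indep_coordinates = prob_space M for M :: "'a measure" +
  fixes Sp :: "'i \<Rightarrow> 'v measure" and Z :: "'i \<Rightarrow> 'a \<Rightarrow> 'v" and N :: "'i set"
  assumes indep: "indep_vars Sp Z N"
begin

abbreviation cexp :: "'i set \<Rightarrow> ('a \<Rightarrow> real) \<Rightarrow> 'a \<Rightarrow> real" where
  "cexp S f \<equiv> real_cond_exp M (sigmaZ M Sp Z S) f"

definition coord_events :: "'i \<Rightarrow> 'a set set" where
  "coord_events j = {Z j -` A \<inter> space M | A. A \<in> sets (Sp j)}"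

lemma sets_sigmaZ: "sets (sigmaZ M Sp Z S) = sigma_sets (space M) (\<Union>j\<in>S. coord_events j)"
  unfolding sigmaZ_def coord_events_def by (subst sets_measure_of) auto

lemma space_sigmaZ [simp]: "space (sigmaZ M Sp Z S) = space M"
  unfolding sigmaZ_def by (subst space_measure_of) auto

lemma sets_sigmaZ_mono: "S \<subseteq> R \<Longrightarrow> sets (sigmaZ M Sp Z S) \<subseteq> sets (sigmaZ M Sp Z R)"
  unfolding sets_sigmaZ by (intro sigma_sets_mono') auto

lemma random_variable_coord: "j \<in> N \<Longrightarrow> random_variable (Sp j) (Z j)"
  using indep unfolding indep_vars_def by auto

lemma sets_sigmaZ_subset_events: "S \<subseteq> N \<Longrightarrow> sets (sigmaZ M Sp Z S) \<subseteq> events"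
  unfolding sets_sigmaZ coord_events_def
  by (intro sets.sigma_sets_subset) (auto intro: measurable_sets random_variable_coord)

lemma subalgebra_sigmaZ: "S \<subseteq> N \<Longrightarrow> subalgebra M (sigmaZ M Sp Z S)"
  unfolding subalgebra_def using sets_sigmaZ_subset_events by simp

lemma measurable_sigmaZ_mono:
  assumes "S \<subseteq> R" "f \<in> borel_measurable (sigmaZ M Sp Z S)"
  shows "f \<in> borel_measurable (sigmaZ M Sp Z R)"
proof (rule measurable_from_subalg)
  show "subalgebra (sigmaZ M Sp Z R) (sigmaZ M Sp Z S)"
    using sets_sigmaZ_mono[OF assms(1)] by (simp add: subalgebra_def)
qed (fact assms(2))

lemma sigma_sets_vimage_subset_sigmaZ:
  assumes "f \<in> borel_measurable (sigmaZ M Sp Z S)"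
  shows "sigma_sets (space M) {f -` A \<inter> space M | A. A \<in> sets borel} \<subseteq> sets (sigmaZ M Sp Z S)"
  using assms by (simp add: measurable_iff_sets sets_vimage_algebra)

lemma indep_set_sigmaZ:
  assumes "S \<subseteq> N" "T \<subseteq> N" "S \<inter> T = {}"
  shows "indep_set (sets (sigmaZ M Sp Z S)) (sets (sigmaZ M Sp Z T))"
proof -
  have "indep_sets (\<lambda>j. sigma_sets (space M) (coord_events j)) N"
    using indep unfolding indep_vars_def coord_events_def by auto
  then have "indep_sets coord_events (\<Union>b. case_bool S T b)"
    by (rule indep_sets_mono) (use assms in \<open>auto split: bool.splits\<close>)
  moreover have "Int_stable (coord_events j)" for j
    unfolding Int_stable_def coord_events_def
  proof clarify
    fix A B
    assume "A \<in> sets (Sp j)" "B \<in> sets (Sp j)"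
    then show "\<exists>C. (Z j -` A \<inter> space M) \<inter> (Z j -` B \<inter> space M) = Z j -` C \<inter> space M
        \<and> C \<in> sets (Sp j)"
      by (intro exI[of _ "A \<inter> B"]) auto
  qed
  moreover have "disjoint_family_on (case_bool S T) UNIV"
    using assms(3) by (auto simp: disjoint_family_on_def split: bool.splits)
  ultimately have "indep_sets (\<lambda>b. sigma_sets (space M) (\<Union>j\<in>case_bool S T b. coord_events j)) UNIV"
    by (rule indep_sets_collect_sigma)
  then show ?thesis
    unfolding indep_set_def
    by (rule indep_sets_mono_sets) (auto simp: sets_sigmaZ split: bool.splits)
qed

lemma indep_var_sigmaZ:
  fixes f g :: "'a \<Rightarrow> real"
  assumes "S \<subseteq> N" "T \<subseteq> N" "S \<inter> T = {}"
    and f: "f \<in> borel_measurable (sigmaZ M Sp Z S)" and g: "g \<in> borel_measurable (sigmaZ M Sp Z T)"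
  shows "indep_var borel f borel g"
  unfolding indep_var_eq
proof (intro conjI)
  show "random_variable borel f" "random_variable borel g"
    using measurable_from_subalg[OF subalgebra_sigmaZ[OF assms(1)] f]
      measurable_from_subalg[OF subalgebra_sigmaZ[OF assms(2)] g] by simp_all
  show "indep_set (sigma_sets (space M) {f -` A \<inter> space M | A. A \<in> sets borel})
      (sigma_sets (space M) {g -` A \<inter> space M | A. A \<in> sets borel})"
    using indep_set_sigmaZ[OF assms(1-3)] sigma_sets_vimage_subset_sigmaZ[OF f]
      sigma_sets_vimage_subset_sigmaZ[OF g]
    by (rule indep_set_mono)
qed

lemma set_integral_Int_indep:
  assumes "S \<subseteq> N" "T \<subseteq> N" "S \<inter> T = {}"
    and h: "h \<in> borel_measurable (sigmaZ M Sp Z S)" "integrable M h"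
    and B: "B \<in> sets (sigmaZ M Sp Z S)" and C: "C \<in> sets (sigmaZ M Sp Z T)"
  shows "(\<integral>x\<in>B \<inter> C. h x \<partial>M) = (\<integral>x\<in>B. h x \<partial>M) * prob C"
proof -
  have events: "B \<in> events" "C \<in> events"
    using B C sets_sigmaZ_subset_events assms(1,2) by auto
  have "indep_var borel (\<lambda>x. indicator B x * h x) borel (indicator C)"
    using assms(1-3) h(1) B C by (intro indep_var_sigmaZ) auto
  moreover have "integrable M (\<lambda>x. indicator B x * h x)"
    using integrable_mult_indicator[OF events(1) h(2)] by simp
  moreover have "integrable M (indicator C :: 'a \<Rightarrow> real)"
    using events(2) by (simp add: emeasure_eq_measure)
  ultimately have "(\<integral>x. indicator B x * h x * indicator C x \<partial>M)
      = (\<integral>x. indicator B x * h x \<partial>M) * (\<integral>x. indicator C x \<partial>M)"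
    by (rule indep_var_lebesgue_integral)
  moreover have "(\<integral>x\<in>B \<inter> C. h x \<partial>M) = (\<integral>x. indicator B x * h x * indicator C x \<partial>M)"
    unfolding set_lebesgue_integral_def
    by (rule Bochner_Integration.integral_cong) (auto simp: indicator_inter_arith)
  moreover have "(\<integral>x. indicator B x * h x \<partial>M) = (\<integral>x\<in>B. h x \<partial>M)"
    by (simp add: set_lebesgue_integral_def)
  ultimately show ?thesis
    using events(2) by simp
qed

lemma sigma_finite_subalgebra_sigmaZ: "S \<subseteq> N \<Longrightarrow> sigma_finite_subalgebra M (sigmaZ M Sp Z S)"
  by (rule finite_measure_subalgebra_is_sigma_finite, unfold_locales, rule subalgebra_sigmaZ)

lemma set_integral_cexp_Int_indep:
  assumes "S \<subseteq> N" "T \<subseteq> N" "S \<inter> T = {}" "integrable M f"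
    and "B \<in> sets (sigmaZ M Sp Z S)" "C \<in> sets (sigmaZ M Sp Z T)"
  shows "(\<integral>x\<in>B \<inter> C. cexp S f x \<partial>M) = (\<integral>x\<in>B. f x \<partial>M) * prob C"
proof -
  interpret sigma_finite_subalgebra M "sigmaZ M Sp Z S"
    using assms(1) by (rule sigma_finite_subalgebra_sigmaZ)
  show ?thesis
    using set_integral_Int_indep[OF assms(1-3) _ _ assms(5,6)] real_cond_exp_int(1)[OF assms(4)]
      real_cond_exp_intA[OF assms(4,5)]
    by simp
qed

lemma sets_sigmaZ_subset_sigma_sets_Int:
  "sets (sigmaZ M Sp Z R) \<subseteq> sigma_sets (space M)
     {B \<inter> C | B C. B \<in> sets (sigmaZ M Sp Z (S \<inter> R)) \<and> C \<in> sets (sigmaZ M Sp Z (R - S))}"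
    (is "_ \<subseteq> sigma_sets _ ?G")
proof -
  have top: "space M \<in> sets (sigmaZ M Sp Z U)" for U
    using sets.top[of "sigmaZ M Sp Z U"] by simp
  have left: "B \<in> ?G" if "B \<in> sets (sigmaZ M Sp Z (S \<inter> R))" for B
  proof -
    have "B = B \<inter> space M"
      using sets.sets_into_space[OF that] by auto
    then show ?thesis
      using that top[of "R - S"] by (intro CollectI exI conjI)
  qed
  have right: "C \<in> ?G" if "C \<in> sets (sigmaZ M Sp Z (R - S))" for C
  proof -
    have "C = space M \<inter> C"
      using sets.sets_into_space[OF that] by auto
    then show ?thesis
      using that top[of "S \<inter> R"] by (intro CollectI exI conjI)
  qed
  have gen: "coord_events j \<subseteq> sets (sigmaZ M Sp Z U)" if "j \<in> U" for j U
    unfolding sets_sigmaZ using that by auto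
  have "coord_events j \<subseteq> ?G" if "j \<in> R" for j
  proof (cases "j \<in> S")
    case True
    with that gen[of j "S \<inter> R"] left show ?thesis by auto
  next
    case False
    with that gen[of j "R - S"] right show ?thesis by auto
  qed
  then show ?thesis
    unfolding sets_sigmaZ[of R] by (intro sigma_sets_mono') (simp add: UN_subset_iff)
qed

text \<open>It suffices to compare integrals over the intersection-stable generator B \<inter> C of the
  sigma-algebra of R, with B determined by S \<inter> R and C by R - S: as C is independent of the
  coordinates in S, both integrals factorise as the integral of f over B times prob C.\<close>
lemma AE_cexp_cexp:
  assumes S: "S \<subseteq> N" and R: "R \<subseteq> N" and f: "integrable M f"
  shows "AE x in M. cexp R (cexp S f) x = cexp (S \<inter> R) f x"
proof -
  let ?G = "{B \<inter> C | B C. B \<in> sets (sigmaZ M Sp Z (S \<inter> R)) \<and> C \<in> sets (sigmaZ M Sp Z (R - S))}"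
  interpret R: sigma_finite_subalgebra M "sigmaZ M Sp Z R"
    using R by (rule sigma_finite_subalgebra_sigmaZ)
  have SR: "S \<inter> R \<subseteq> N" and RS: "R - S \<subseteq> N"
    using S R by auto
  note cexp_int = sigma_finite_subalgebra.real_cond_exp_int[OF sigma_finite_subalgebra_sigmaZ f]
  have on_G: "(\<integral>x\<in>A. cexp S f x \<partial>M) = (\<integral>x\<in>A. cexp (S \<inter> R) f x \<partial>M)" if "A \<in> ?G" for A
  proof -
    obtain B C where A: "A = B \<inter> C" and B: "B \<in> sets (sigmaZ M Sp Z (S \<inter> R))"
      and C: "C \<in> sets (sigmaZ M Sp Z (R - S))"
      using \<open>A \<in> ?G\<close> by blast
    have "B \<in> sets (sigmaZ M Sp Z S)"
      using B sets_sigmaZ_mono[of "S \<inter> R" S] by auto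
    moreover have "S \<inter> R \<inter> (R - S) = {}"
      by auto
    ultimately show ?thesis
      unfolding A using set_integral_cexp_Int_indep[OF S RS Diff_disjoint f _ C]
        set_integral_cexp_Int_indep[OF SR RS _ f B C] by simp
  qed
  have G_events: "?G \<subseteq> events"
    using sets_sigmaZ_subset_events[OF SR] sets_sigmaZ_subset_events[OF RS] by auto
  have total: "(\<integral>x. cexp S f x \<partial>M) = (\<integral>x. cexp (S \<inter> R) f x \<partial>M)"
    using cexp_int(2)[OF S] cexp_int(2)[OF SR] by simp
  have "(\<integral>x\<in>A. cexp S f x \<partial>M) = (\<integral>x\<in>A. cexp (S \<inter> R) f x \<partial>M)"
    if "A \<in> sets (sigmaZ M Sp Z R)" for A
    using that sets_sigmaZ_subset_sigma_sets_Int[of R S]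
    by (intro set_integral_eq_on_sigma_sets[OF cexp_int(1)[OF S] cexp_int(1)[OF SR]
          Int_stable_Int_sets G_events total on_G]) auto
  moreover have "cexp (S \<inter> R) f \<in> borel_measurable (sigmaZ M Sp Z R)"
    by (rule measurable_sigmaZ_mono[of "S \<inter> R"]) auto
  ultimately show ?thesis
    using cexp_int(1)[OF S] cexp_int(1)[OF SR] by (intro R.real_cond_exp_charact)
qed

lemma integral_cexp_mult_cexp:
  assumes "S \<subseteq> N" "R \<subseteq> N" "sq_integrable M f" "sq_integrable M g"
  shows "(\<integral>x. cexp S f x * cexp R g x \<partial>M) = (\<integral>x. cexp (S \<inter> R) f x * g x \<partial>M)"
proof -
  have "(\<integral>x. cexp S f x * cexp R g x \<partial>M) = (\<integral>x. cexp R (cexp S f) x * g x \<partial>M)"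
    using assms subalgebra_sigmaZ
    by (intro integral_real_cond_exp_mult_sym[symmetric] sq_integrable_real_cond_exp) auto
  also have "\<dots> = (\<integral>x. cexp (S \<inter> R) f x * g x \<partial>M)"
    using AE_cexp_cexp[OF assms(1,2) integrable_sq_integrable[OF assms(3)]] assms(4)
    by (intro integral_cong_AE) (auto simp: sq_integrable_def)
  finally show ?thesis .
qed

definition inner_game :: "('a \<Rightarrow> real) \<Rightarrow> ('a \<Rightarrow> real) \<Rightarrow> 'i set \<Rightarrow> real" where
  "inner_game f g S = (\<integral>x. cexp S f x * g x \<partial>M)"

definition hoeffding_component :: "'i set \<Rightarrow> ('a \<Rightarrow> real) \<Rightarrow> 'a \<Rightarrow> real" where
  "hoeffding_component T f x = (\<Sum>S\<in>Pow T. (-1) ^ card (T - S) * cexp S f x)"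

lemma sq_integrable_cexp: "S \<subseteq> N \<Longrightarrow> sq_integrable M f \<Longrightarrow> sq_integrable M (cexp S f)"
  using sq_integrable_real_cond_exp[OF subalgebra_sigmaZ] .

lemma sq_integrable_hoeffding_component:
  assumes "finite T" "T \<subseteq> N" "sq_integrable M f"
  shows "sq_integrable M (hoeffding_component T f)"
  unfolding hoeffding_component_def[abs_def] using assms
  by (intro sq_integrable_sum sq_integrable_cmult sq_integrable_cexp) auto

lemma integral_hoeffding_component_mult:
  assumes T: "finite T" "T \<subseteq> N" and fg: "sq_integrable M f" "sq_integrable M g"
  shows "(\<integral>x. hoeffding_component T f x * hoeffding_component T g x \<partial>M)
           = moebius (inner_game f g) T"
proof -
  let ?sign = "\<lambda>S R. (-1) ^ card (T - S) * (-1) ^ card (T - R) :: real"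
  have subsets: "S \<subseteq> N" if "S \<in> Pow T" for S
    using that T by auto
  have int: "integrable M (\<lambda>x. cexp S f x * cexp R g x)" if "S \<in> Pow T" "R \<in> Pow T" for S R
    using that fg by (intro integrable_mult_sq_integrable sq_integrable_cexp subsets)
  have "(\<integral>x. hoeffding_component T f x * hoeffding_component T g x \<partial>M)
      = (\<integral>x. (\<Sum>S\<in>Pow T. \<Sum>R\<in>Pow T. ?sign S R * (cexp S f x * cexp R g x)) \<partial>M)"
    unfolding hoeffding_component_def sum_product by (simp add: algebra_simps)
  also have "\<dots> = (\<Sum>S\<in>Pow T. \<integral>x. (\<Sum>R\<in>Pow T. ?sign S R * (cexp S f x * cexp R g x)) \<partial>M)"
    using int by (intro Bochner_Integration.integral_sum Bochner_Integration.integrable_sum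
        integrable_mult_right)
  also have "\<dots> = (\<Sum>S\<in>Pow T. \<Sum>R\<in>Pow T. ?sign S R * (\<integral>x. cexp S f x * cexp R g x \<partial>M))"
    using int by (simp add: Bochner_Integration.integral_sum)
  also have "\<dots> = (\<Sum>S\<in>Pow T. \<Sum>R\<in>Pow T. ?sign S R * inner_game f g (S \<inter> R))"
    using fg subsets by (intro sum.cong refl) (simp add: inner_game_def integral_cexp_mult_cexp)
  also have "\<dots> = moebius (inner_game f g) T"
    using T(1) by (rule moebius_Int)
  finally show ?thesis .
qed

lemma moebius_inner_game_nonneg:
  assumes "finite T" "T \<subseteq> N" "sq_integrable M f"
  shows "0 \<le> moebius (inner_game f f) T"
proof -
  have "0 \<le> (\<integral>x. hoeffding_component T f x * hoeffding_component T f x \<partial>M)"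
    by (rule integral_nonneg_AE) simp
  then show ?thesis
    using integral_hoeffding_component_mult[OF assms assms(3)] by simp
qed

lemma inner_game_le:
  assumes "S \<subseteq> N" "sq_integrable M f"
  shows "inner_game f f S \<le> (\<integral>x. (f x)\<^sup>2 \<partial>M)"
  using integral_real_cond_exp_mult_self[OF subalgebra_sigmaZ[OF assms(1)] assms(2)]
    integral_real_cond_exp_square_le[OF subalgebra_sigmaZ[OF assms(1)] assms(2)]
  by (simp add: inner_game_def)

lemma inner_game_self_nonneg: "S \<subseteq> N \<Longrightarrow> sq_integrable M f \<Longrightarrow> 0 \<le> inner_game f f S"
  using integral_real_cond_exp_mult_self[OF subalgebra_sigmaZ] by (simp add: inner_game_def)

lemma inner_game_diff_add:
  assumes S: "S \<subseteq> N" and fg: "sq_integrable M f" "sq_integrable M g"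
  shows "inner_game (\<lambda>x. f x - g x) (\<lambda>x. f x + g x) S = inner_game f f S - inner_game g g S"
proof -
  have sym: "inner_game f g S = inner_game g f S"
    unfolding inner_game_def
    using integral_real_cond_exp_mult_sym[OF subalgebra_sigmaZ[OF S] fg] by (simp add: mult.commute)
  have int: "integrable M (\<lambda>x. cexp S u x * v x)" if "sq_integrable M u" "sq_integrable M v" for u v
    using that by (intro integrable_mult_sq_integrable sq_integrable_cexp S)
  have "AE x in M. cexp S (\<lambda>x. f x - g x) x = cexp S f x - cexp S g x"
    using fg by (intro sigma_finite_subalgebra.real_cond_exp_diff sigma_finite_subalgebra_sigmaZ S
        integrable_sq_integrable)
  then have "AE x in M. cexp S (\<lambda>x. f x - g x) x * (f x + g x)
      = (cexp S f x - cexp S g x) * (f x + g x)"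
    by eventually_elim simp
  then have "inner_game (\<lambda>x. f x - g x) (\<lambda>x. f x + g x) S
      = (\<integral>x. (cexp S f x - cexp S g x) * (f x + g x) \<partial>M)"
    unfolding inner_game_def using fg
    by (intro integral_cong_AE) (auto simp: sq_integrable_def)
  also have "\<dots> = (\<integral>x. (cexp S f x * f x + cexp S f x * g x)
                         - (cexp S g x * f x + cexp S g x * g x) \<partial>M)"
    by (simp add: algebra_simps)
  also have "\<dots> = inner_game f f S + inner_game f g S - inner_game g f S - inner_game g g S"
    using int fg by (simp add: inner_game_def)
  finally show ?thesis
    using sym by simp
qed

lemma sets_sigmaZ_empty: "sets (sigmaZ M Sp Z {}) = {{}, space M}"
  by (simp add: sets_sigmaZ sigma_sets_empty_eq)

lemma vgame_eq_inner_game: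
  assumes S: "S \<subseteq> N" and f: "sq_integrable M f" "expectation f = 0"
  shows "vgame M Sp Z f S = inner_game f f S"
proof (cases "S = {}")
  case True
  have "AE x in M. cexp {} f x = expectation f"
    by (rule AE_real_cond_exp_trivial[OF subalgebra_sigmaZ sets_sigmaZ_empty
          integrable_sq_integrable[OF f(1)]]) simp
  then have "AE x in M. cexp {} f x = 0"
    using f(2) by simp
  then have "inner_game f f {} = (\<integral>x. 0 \<partial>M)"
    unfolding inner_game_def using f(1)
    by (intro integral_cong_AE) (auto simp: sq_integrable_def)
  with True show ?thesis
    by (simp add: vgame_def)
next
  case False
  have "expectation (cexp S f) = 0"
    using sigma_finite_subalgebra.real_cond_exp_int(2)[OF sigma_finite_subalgebra_sigmaZ[OF S]
        integrable_sq_integrable[OF f(1)]] f(2) by simp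
  with False show ?thesis
    using integral_real_cond_exp_mult_self[OF subalgebra_sigmaZ[OF S] f(1)]
    by (simp add: vgame_def var_def inner_game_def)
qed

lemma abs_moebius_inner_game_diff_le:
  assumes T: "finite T" "T \<subseteq> N" and fg: "sq_integrable M f" "sq_integrable M g"
  defines "u \<equiv> \<lambda>x. f x - g x" and "w \<equiv> \<lambda>x. f x + g x"
  shows "\<bar>moebius (inner_game f f) T - moebius (inner_game g g) T\<bar>
           \<le> sqrt (moebius (inner_game u u) T) * sqrt (moebius (inner_game w w) T)"
proof -
  have uw: "sq_integrable M u" "sq_integrable M w"
    unfolding u_def w_def using fg by (simp_all add: sq_integrable_diff sq_integrable_add)
  have "moebius (inner_game f f) T - moebius (inner_game g g) T = moebius (inner_game u w) T"
    unfolding moebius_diff u_def w_def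
    using T fg by (intro moebius_cong inner_game_diff_add[symmetric]) auto
  also have "\<dots> = (\<integral>x. hoeffding_component T u x * hoeffding_component T w x \<partial>M)"
    using integral_hoeffding_component_mult[OF T uw] by simp
  finally show ?thesis
    using Cauchy_Schwarz_integral[OF sq_integrable_hoeffding_component[OF T uw(1)]
        sq_integrable_hoeffding_component[OF T uw(2)]]
      integral_hoeffding_component_mult[OF T uw(1) uw(1)]
      integral_hoeffding_component_mult[OF T uw(2) uw(2)]
    by (simp add: power2_eq_square)
qed

lemma sum_abs_moebius_inner_game_diff_le:
  assumes S: "S \<in> Fpow N" and fg: "sq_integrable M f" "sq_integrable M g"
  defines "u \<equiv> \<lambda>x. f x - g x" and "w \<equiv> \<lambda>x. f x + g x"
  shows "(\<Sum>T\<in>Pow S. \<bar>moebius (inner_game f f) T - moebius (inner_game g g) T\<bar>)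
           \<le> sqrt (\<integral>x. (u x)\<^sup>2 \<partial>M) * sqrt (\<integral>x. (w x)\<^sup>2 \<partial>M)"
proof -
  have uw: "sq_integrable M u" "sq_integrable M w"
    unfolding u_def w_def using fg by (simp_all add: sq_integrable_diff sq_integrable_add)
  have subsets: "finite T" "T \<subseteq> N" if "T \<in> Pow S" for T
    using that S by (auto simp: Fpow_def intro: finite_subset)
  let ?norm = "\<lambda>h T. sqrt (moebius (inner_game h h) T)"
  have "\<bar>moebius (inner_game f f) T - moebius (inner_game g g) T\<bar> \<le> \<bar>?norm u T\<bar> * \<bar>?norm w T\<bar>"
    if "T \<in> Pow S" for T
    using abs_moebius_inner_game_diff_le[OF subsets[OF that] fg]
      moebius_inner_game_nonneg[OF subsets[OF that] uw(1)]
      moebius_inner_game_nonneg[OF subsets[OF that] uw(2)]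
    by (simp add: u_def w_def)
  then have "(\<Sum>T\<in>Pow S. \<bar>moebius (inner_game f f) T - moebius (inner_game g g) T\<bar>)
      \<le> L2_set (?norm u) (Pow S) * L2_set (?norm w) (Pow S)"
    by (rule order_trans[OF sum_mono L2_set_mult_ineq])
  also have "\<dots> = sqrt (inner_game u u S) * sqrt (inner_game w w S)"
    using S subsets moebius_inner_game_nonneg uw
    by (simp add: L2_set_def sum_Pow_moebius Fpow_def)
  also have "\<dots> \<le> sqrt (\<integral>x. (u x)\<^sup>2 \<partial>M) * sqrt (\<integral>x. (w x)\<^sup>2 \<partial>M)"
    using S uw inner_game_le inner_game_self_nonneg
    by (intro mult_mono real_sqrt_le_mono) (auto simp: Fpow_def)
  finally show ?thesis .
qed

lemma moebius_vgame:
  assumes "T \<subseteq> N" "sq_integrable M f" "expectation f = 0"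
  shows "moebius (vgame M Sp Z f) T = moebius (inner_game f f) T"
  using assms by (intro moebius_cong vgame_eq_inner_game) auto

lemma sum_abs_moebius_vgame_diff_le:
  assumes S: "S \<in> Fpow N"
    and f: "sq_integrable M f" "expectation f = 0" "(\<integral>x. (f x)\<^sup>2 \<partial>M) = 1"
    and g: "sq_integrable M g" "expectation g = 0" "(\<integral>x. (g x)\<^sup>2 \<partial>M) = 1"
  shows "(\<Sum>T\<in>Pow S. \<bar>moebius (vgame M Sp Z f) T - moebius (vgame M Sp Z g) T\<bar>)
           \<le> 2 * sqrt (\<integral>x. (f x - g x)\<^sup>2 \<partial>M)"
proof -
  have "0 \<le> (\<integral>x. (f x - g x)\<^sup>2 \<partial>M)"
    by simp
  then have "(\<integral>x. (f x + g x)\<^sup>2 \<partial>M) \<le> 4"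
    using integral_parallelogram[OF f(1) g(1)] f(3) g(3) by linarith
  then have "sqrt (\<integral>x. (f x + g x)\<^sup>2 \<partial>M) \<le> 2"
    using real_sqrt_le_mono[of _ 4] by simp
  then have "sqrt (\<integral>x. (f x - g x)\<^sup>2 \<partial>M) * sqrt (\<integral>x. (f x + g x)\<^sup>2 \<partial>M)
      \<le> 2 * sqrt (\<integral>x. (f x - g x)\<^sup>2 \<partial>M)"
    by (subst mult.commute) (intro mult_right_mono; simp)
  moreover have "(\<Sum>T\<in>Pow S. \<bar>moebius (vgame M Sp Z f) T - moebius (vgame M Sp Z g) T\<bar>)
      = (\<Sum>T\<in>Pow S. \<bar>moebius (inner_game f f) T - moebius (inner_game g g) T\<bar>)"
    using S f g by (intro sum.cong refl) (auto simp: Fpow_def moebius_vgame)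
  ultimately show ?thesis
    using sum_abs_moebius_inner_game_diff_le[OF S f(1) g(1)] by simp
qed

end

theorem proposition2:
  fixes M :: "'a measure" and Sp :: "'i \<Rightarrow> 'v measure" and Z :: "'i \<Rightarrow> 'a \<Rightarrow> 'v"
    and N :: "'i set" and X Y :: "'a \<Rightarrow> real"
  assumes "prob_space M"
    and "countable N"
    and "\<forall>j\<in>N. standard_borel (Sp j)"
    and "prob_space.indep_vars M Sp Z N"
    and "X \<in> BZ M Sp Z N" and "Y \<in> BZ M Sp Z N"
  shows "TV N (shapley_infl M Sp Z N X) (shapley_infl M Sp Z N Y)
           \<le> sqrt (\<integral>\<omega>. (X \<omega> - Y \<omega>)\<^sup>2 \<partial>M)"
proof -
  interpret indep_coordinates M Sp Z N
    using assms(1,4) by (simp add: indep_coordinates_def indep_coordinates_axioms_def)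
  have BZ: "sq_integrable M W" "expectation W = 0" "(\<integral>x. (W x)\<^sup>2 \<partial>M) = 1"
    if "W \<in> BZ M Sp Z N" for W
    using that measurable_from_subalg[OF subalgebra_sigmaZ[OF order.refl]]
    by (auto simp: BZ_def sq_integrable_def)
  note X = BZ[OF assms(5)] and Y = BZ[OF assms(6)]
  show ?thesis
    unfolding shapley_infl_def
  proof (rule TV_shapley_le[where C = 1])
    show "vgame M Sp Z X {} = 0" "vgame M Sp Z Y {} = 0"
      by (simp_all add: vgame_def)
    show "0 \<le> moebius (vgame M Sp Z X) T" "0 \<le> moebius (vgame M Sp Z Y) T" if "T \<in> Fpow N" for T
      using that X Y by (simp_all add: Fpow_def moebius_vgame moebius_inner_game_nonneg)
    show "vgame M Sp Z X S \<le> 1" "vgame M Sp Z Y S \<le> 1" if "S \<in> Fpow N" for S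
      using that X Y inner_game_le[of S X] inner_game_le[of S Y]
      by (simp_all add: Fpow_def vgame_eq_inner_game)
    show "(\<Sum>T\<in>Pow S. \<bar>moebius (vgame M Sp Z X) T - moebius (vgame M Sp Z Y) T\<bar>)
        \<le> 2 * sqrt (\<integral>x. (X x - Y x)\<^sup>2 \<partial>M)" if "S \<in> Fpow N" for S
      using that X Y by (rule sum_abs_moebius_vgame_diff_le)
  qed
qed

end
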